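(* Let $n\geqslant 1$ and $\epsilon\in\,]0,1[$. The subset $\mathcal{P}^-_{0_n}(\partial\square[n],\epsilon)$ equipped with the relative topology is a closed subset of $\mathcal{P}^-_{0_n}(\square[n],\epsilon)$ which is $\Delta$-generated, $\Delta$-Hausdorff, metrizable, compact and sequentially compact.
   Context: ${\mathbf{Top}}$ denotes the category of $\Delta$-generated spaces, with internal hom $\mathbf{TOP}(-,-)$. $\square^{op}\mathbf{Set}$ is the category of precubical sets, $\square[n]$ the $n$-cube and $\partial\square[n]$ its boundary (cubes of dimension $\leqslant n-1$). For a precubical set $K$, $|K|_{geom}$ is its geometric realization and each $n$-cube $c$ induces $|c|_{geom}:[0,1]^n\to|K|_{geom}$. The initial vertex of an $n$-cube $c$ is $c^-=\partial_1^0\cdots\partial_n^0c$, and $\mathcal{C}^-_\alpha(K)=\{c\in K\mid\dim(c)\geqslant1,\ c^-=\alpha\}$. Let $0_n=(0,\dots,0)$. For $n\geqslant1$, $N_n(\epsilon)$ is the set of natural directed paths $\phi=(\phi_1,\dots,\phi_n):[0,\epsilon]\to[0,1]^n$ (non-decreasing in each coordinate, $\phi_1(t)+\dots+\phi_n(t)=t$), with the $\Delta$-kelleyfication of the relative topology from $\mathbf{TOP}([0,\epsilon],[0,1]^n)$. For $\alpha\in K_0$, $\mathcal{P}^-_\alpha(K,\epsilon)=\{|c|_{geom}\phi\mid c\in\mathcal{C}^-_\alpha(K),\ \phi\in N_{\dim(c)}(\epsilon)\}$ with the $\Delta$-kelleyfication of the relative topology from $\mathbf{TOP}([0,\epsilon],|K|_{geom})$.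 In particular $\mathcal{P}^-_{0_n}(\square[n],\epsilon)=N_n(\epsilon)$. *)

theory Defs
  imports "HOL-Analysis.Analysis" "HOL-Homology.Simplices"
begin

definition simplex_top :: "nat \<Rightarrow> (nat \<Rightarrow> real) topology" where
  "simplex_top k = subtopology (powertop_real UNIV) (standard_simplex k)"

definition delta_kelley :: "'a topology \<Rightarrow> 'a topology" where
  "delta_kelley X = topology (\<lambda>U. U \<subseteq> topspace X \<and>
     (\<forall>k f. continuous_map (simplex_top k) X f \<longrightarrow>
        openin (simplex_top k) {x \<in> topspace (simplex_top k). f x \<in> U}))"

definition delta_generated :: "'a topology \<Rightarrow> bool" where
  "delta_generated X \<longleftrightarrow> delta_kelley X = X"

text \<open>The binary product in Top (Delta-generated spaces) is the Delta-kelleyfication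
  of the usual product; a space is Delta-Hausdorff if its diagonal is closed in it.\<close>
definition delta_hausdorff :: "'a topology \<Rightarrow> bool" where
  "delta_hausdorff X \<longleftrightarrow>
     closedin (delta_kelley (prod_topology X X)) {(x, x) | x. x \<in> topspace X}"

definition sequentially_compact_top :: "'a topology \<Rightarrow> bool" where
  "sequentially_compact_top X \<longleftrightarrow>
     (\<forall>s::nat \<Rightarrow> 'a. (\<forall>m. s m \<in> topspace X) \<longrightarrow>
        (\<exists>l r. l \<in> topspace X \<and> strict_mono r \<and> limitin X (s \<circ> r) l sequentially))"

definition cmaps :: "real \<Rightarrow> 'b topology \<Rightarrow> (real \<Rightarrow> 'b) set" where
  "cmaps e Y = {f. continuous_map (top_of_set {0..e}) Y f \<and> f \<in> extensional {0..e}}"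

definition compact_open :: "real \<Rightarrow> 'b topology \<Rightarrow> (real \<Rightarrow> 'b) topology" where
  "compact_open e Y = subtopology
     (topology_generated_by
        {{f \<in> cmaps e Y. f ` K \<subseteq> U} | K U. compactin (top_of_set {0..e}) K \<and> openin Y U})
     (cmaps e Y)"

definition TOP :: "real \<Rightarrow> 'b topology \<Rightarrow> (real \<Rightarrow> 'b) topology" where
  "TOP e Y = delta_kelley (compact_open e Y)"

text \<open>Geometric realization of the n-cube: [0,1]^n inside R^n (coordinates i < n).\<close>
definition cube_top :: "nat \<Rightarrow> (nat \<Rightarrow> real) topology" where
  "cube_top n = subtopology (Euclidean_space n) {x. \<forall>i<n. 0 \<le> x i \<and> x i \<le> 1}"

definition N_set :: "nat \<Rightarrow> real \<Rightarrow> (real \<Rightarrow> nat \<Rightarrow> real) set" where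
  "N_set n e = {\<phi> \<in> topspace (TOP e (cube_top n)).
      (\<forall>i<n. mono_on {0..e} (\<lambda>t. \<phi> t i)) \<and> (\<forall>t\<in>{0..e}. (\<Sum>i<n. \<phi> t i) = t)}"

text \<open>N_n(eps) = P^-_{0_n}(square[n], eps), Delta-kelleyfied relative topology.\<close>
definition N_top :: "nat \<Rightarrow> real \<Rightarrow> (real \<Rightarrow> nat \<Rightarrow> real) topology" where
  "N_top n e = delta_kelley (subtopology (TOP e (cube_top n)) (N_set n e))"

text \<open>The geometric realization of the face of square[n] obtained by fixing the coordinates
  in S to 0 (its initial vertex is 0_n): it inserts zeros at the positions in S.\<close>
definition face_map :: "nat \<Rightarrow> nat set \<Rightarrow> (nat \<Rightarrow> real) \<Rightarrow> (nat \<Rightarrow> real)" where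
  "face_map n S x = (\<lambda>i. if i \<in> S \<or> n \<le> i then 0 else x (card {j. j < i \<and> j \<notin> S}))"

text \<open>The cubes c of the boundary of square[n] with dim c >= 1 and c^- = 0_n are exactly the
  faces fixing a set S of coordinates to 0, with 1 <= n - card S <= n - 1.\<close>
definition P_boundary :: "nat \<Rightarrow> real \<Rightarrow> (real \<Rightarrow> nat \<Rightarrow> real) set" where
  "P_boundary n e = {restrict (\<lambda>t. face_map n S (\<phi> t)) {0..e} | S k \<phi>.
      S \<subseteq> {..<n} \<and> S \<noteq> {} \<and> k = n - card S \<and> 1 \<le> k \<and> \<phi> \<in> N_set k e}"

end

(*
  Natural d-paths of the n-cube carry three topologies that coincide: the compact-open
  topology, the topology of pointwise convergence and the topology of the uniform l1-distance.
  Every natural d-path is 1-Lipschitz for the l1-norm, so pointwise and uniform convergence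
  agree; the pointwise topology is compact by Tychonoff, the natural d-paths forming a closed
  subset of a product of cubes, while the metric topology is Hausdorff.  The metric space is
  also Delta-generated: a sequence converging fast to a path l can be threaded on a single
  continuous path running back and forth along the segments issued from l, and Delta-open sets
  pull back to open sets along paths.  So Delta-kelleyfication changes nothing and N_n(eps) is
  a compact metric space.

  The natural d-paths of the boundary are exactly those with a vanishing coordinate.  They
  form a closed subset, hence a compact metric space, and they are locally star-shaped: a path
  close to l can only vanish in coordinates where l vanishes.  The threading argument then
  shows that this subspace is Delta-generated as well.
*)
theory Submission
  imports Defs
begin

lemma openin_delta_kelley:
  "openin (delta_kelley X) U \<longleftrightarrow> U \<subseteq> topspace X \<and>
     (\<forall>k f. continuous_map (simplex_top k) X f \<longrightarrow>
        openin (simplex_top k) {x \<in> topspace (simplex_top k). f x \<in> U})"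
proof -
  have Int: "{x \<in> A. f x \<in> S \<inter> T} = {x \<in> A. f x \<in> S} \<inter> {x \<in> A. f x \<in> T}"
    and Union: "{x \<in> A. f x \<in> \<Union>\<K>} = (\<Union>S\<in>\<K>. {x \<in> A. f x \<in> S})"
    for A :: "'b set" and f :: "'b \<Rightarrow> 'a" and S T \<K>
    by blast+
  have "istopology (\<lambda>U. U \<subseteq> topspace X \<and>
     (\<forall>k f. continuous_map (simplex_top k) X f \<longrightarrow>
        openin (simplex_top k) {x \<in> topspace (simplex_top k). f x \<in> U}))"
    unfolding istopology_def Int Union by (auto intro!: openin_Int openin_Union)
  then show ?thesis
    unfolding delta_kelley_def by simp
qed

lemma openin_imp_delta_kelley: "openin X U \<Longrightarrow> openin (delta_kelley X) U"
  by (auto simp: openin_delta_kelley openin_subset openin_continuous_map_preimage)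

lemma topspace_delta_kelley [simp]: "topspace (delta_kelley X) = topspace X"
proof (rule subset_antisym)
  show "topspace (delta_kelley X) \<subseteq> topspace X"
    by (metis openin_delta_kelley openin_topspace)
  show "topspace X \<subseteq> topspace (delta_kelley X)"
    by (simp add: openin_imp_delta_kelley openin_subset)
qed

lemma closedin_imp_delta_kelley: "closedin X C \<Longrightarrow> closedin (delta_kelley X) C"
  by (simp add: closedin_def openin_imp_delta_kelley)

lemma continuous_map_simplex_delta_kelley:
  "continuous_map (simplex_top k) X f \<Longrightarrow> continuous_map (simplex_top k) (delta_kelley X) f"
  by (auto simp: continuous_map_def openin_delta_kelley)

lemma delta_kelley_eqI:
  assumes "topspace Y = topspace X"
    and "\<And>U. openin X U \<Longrightarrow> openin Y U"
    and "\<And>U. openin Y U \<Longrightarrow> openin (delta_kelley X) U"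
  shows "delta_kelley Y = delta_kelley X"
proof -
  have same_maps: "continuous_map (simplex_top k) Y f \<longleftrightarrow> continuous_map (simplex_top k) X f"
    for k f
    using continuous_map_simplex_delta_kelley[of k X f] assms
    by (auto simp: continuous_map_def)
  show ?thesis
    unfolding topology_eq openin_delta_kelley same_maps assms(1) by (intro allI refl)
qed

lemma delta_kelley_subtopology_delta_kelley:
  "delta_kelley (subtopology (delta_kelley X) S) = delta_kelley (subtopology X S)"
proof (rule delta_kelley_eqI)
  fix U
  assume "openin (subtopology (delta_kelley X) S) U"
  then obtain V where V: "openin (delta_kelley X) V" "U = V \<inter> S"
    by (auto simp: openin_subtopology)
  have "openin (simplex_top k) {x \<in> topspace (simplex_top k). f x \<in> U}"
    if "continuous_map (simplex_top k) (subtopology X S) f" for k f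
  proof -
    have "continuous_map (simplex_top k) X f" "f \<in> topspace (simplex_top k) \<rightarrow> S"
      using that by (auto simp: continuous_map_in_subtopology)
    moreover have "{x \<in> topspace (simplex_top k). f x \<in> U}
        = {x \<in> topspace (simplex_top k). f x \<in> V}"
      using calculation(2) V(2) by auto
    ultimately show ?thesis
      using V(1) by (simp add: openin_delta_kelley)
  qed
  moreover have "U \<subseteq> topspace (subtopology X S)"
    using V openin_subset by fastforce
  ultimately show "openin (delta_kelley (subtopology X S)) U"
    by (simp add: openin_delta_kelley)
qed (auto simp: openin_subtopology intro: openin_imp_delta_kelley)

lemma Hausdorff_imp_delta_hausdorff: "Hausdorff_space X \<Longrightarrow> delta_hausdorff X"
proof -
  assume "Hausdorff_space X"
  then have "closedin (prod_topology X X) ((\<lambda>x. (x, x)) ` topspace X)"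
    by (simp add: Hausdorff_space_closedin_diagonal)
  moreover have "(\<lambda>x. (x, x)) ` topspace X = {(x, x) | x. x \<in> topspace X}"
    by auto
  ultimately show ?thesis
    unfolding delta_hausdorff_def by (simp add: closedin_imp_delta_kelley)
qed

lemma openin_delta_kelley_path_preimage:
  fixes \<gamma> :: "real \<Rightarrow> 'a"
  assumes U: "openin (delta_kelley X) U"
    and \<gamma>: "continuous_map (top_of_set {0..1}) X \<gamma>"
  shows "openin (top_of_set {0..1}) {s \<in> {0..1}. \<gamma> s \<in> U}"
proof -
  define p where "p = (\<lambda>x::nat \<Rightarrow> real. x 0)"
  define j where "j = (\<lambda>s::real. \<lambda>i::nat. if i = 0 then s else if i = 1 then 1 - s else 0)"
  have "continuous_map (powertop_real UNIV) euclideanreal p"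
    unfolding p_def by (rule continuous_map_product_projection) simp
  then have "continuous_map (simplex_top 1) (top_of_set {0..1}) p"
    unfolding simplex_top_def continuous_map_in_subtopology
    by (auto simp: standard_simplex_def p_def continuous_map_from_subtopology)
  then have pre: "openin (simplex_top 1) {x \<in> topspace (simplex_top 1). \<gamma> (p x) \<in> U}"
    using U \<gamma> continuous_map_compose[of _ _ p X \<gamma>]
    by (auto simp: openin_delta_kelley o_def)
  have j: "continuous_map (top_of_set {0..1}) (simplex_top 1) j"
    unfolding simplex_top_def continuous_map_in_subtopology continuous_map_componentwise_UNIV
  proof (intro conjI allI)
    show "continuous_map (top_of_set {0..1}) euclideanreal (\<lambda>s. j s i)" for i
      by (cases "i = 0"; cases "i = 1") (auto simp: j_def intro!: continuous_intros)
  qed (auto simp: j_def standard_simplex_def)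
  have "openin (top_of_set {0..1})
      {s \<in> topspace (top_of_set {0..1}). j s \<in> {x \<in> topspace (simplex_top 1). \<gamma> (p x) \<in> U}}"
    by (rule openin_continuous_map_preimage[OF j pre])
  moreover have eq: "{s \<in> topspace (top_of_set {0..1}). j s \<in> {x \<in> topspace (simplex_top 1). \<gamma> (p x) \<in> U}}
      = {s \<in> {0..1}. \<gamma> s \<in> U}"
  proof -
    have "j s \<in> topspace (simplex_top 1)" "p (j s) = s" if "s \<in> {0..1}" for s
      using j that by (auto simp: continuous_map_def p_def j_def)
    then show ?thesis
      by auto
  qed
  ultimately show ?thesis
    by (simp only:)
qed

definition on_path_from :: "'a topology \<Rightarrow> 'a \<Rightarrow> (nat \<Rightarrow> 'a) \<Rightarrow> bool" where
  "on_path_from X l a \<longleftrightarrow> (\<exists>(\<gamma> :: real \<Rightarrow> 'a) c. continuous_map (top_of_set {0..1}) X \<gamma> \<and>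
      \<gamma> 0 = l \<and> c \<longlonglongrightarrow> 0 \<and> (\<forall>m. c m \<in> {0..1} \<and> \<gamma> (c m) = a m))"

lemma on_path_from_enters_open:
  assumes "on_path_from X l a" "openin (delta_kelley X) U" "l \<in> U"
  shows "\<exists>m. a m \<in> U"
proof -
  obtain \<gamma> :: "real \<Rightarrow> 'a" and c where \<gamma>: "continuous_map (top_of_set {0..1}) X \<gamma>" "\<gamma> 0 = l"
    and c: "c \<longlonglongrightarrow> 0" "\<And>m. c m \<in> {0..1} \<and> \<gamma> (c m) = a m"
    using assms(1) unfolding on_path_from_def by blast
  have "openin (top_of_set {0..1}) {s \<in> {0..1}. \<gamma> s \<in> U}"
    by (rule openin_delta_kelley_path_preimage[OF assms(2) \<gamma>(1)])
  then obtain T where "open T" and T: "{s \<in> {0..1}. \<gamma> s \<in> U} = {0..1} \<inter> T"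
    by (meson openin_open)
  moreover have "0 \<in> {s \<in> {0..1}. \<gamma> s \<in> U}"
    using \<gamma>(2) assms(3) by simp
  ultimately have "\<forall>\<^sub>F m in sequentially. c m \<in> T"
    using c(1) by (intro topological_tendstoD) blast+
  then obtain m where "c m \<in> T"
    by (meson eventually_sequentially order_refl)
  then have "c m \<in> {s \<in> {0..1}. \<gamma> s \<in> U}"
    using T c(2) by blast
  then show ?thesis
    using c(2) by auto
qed

lemma (in Metric_space) delta_generated_mtopologyI:
  assumes "\<And>l. l \<in> M \<Longrightarrow>
    \<exists>r>0. \<forall>a. (\<forall>m. a m \<in> mball l (min r ((1/2)^m))) \<longrightarrow> on_path_from mtopology l a"
  shows "delta_generated mtopology"
  unfolding delta_generated_def topology_eq
proof (intro allI iffI)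
  fix U
  assume U: "openin (delta_kelley mtopology) U"
  have "\<exists>\<rho>>0. mball l \<rho> \<subseteq> U" if "l \<in> U" for l
  proof (rule ccontr)
    assume not_nbhd: "\<nexists>\<rho>. \<rho> > 0 \<and> mball l \<rho> \<subseteq> U"
    have "l \<in> M"
      using U that by (auto simp: openin_delta_kelley)
    then obtain r where "r > 0"
      and r: "\<And>a. (\<forall>m. a m \<in> mball l (min r ((1/2)^m))) \<Longrightarrow> on_path_from mtopology l a"
      using assms by metis
    have "\<exists>x. x \<in> mball l (min r ((1/2)^m)) \<and> x \<notin> U" for m :: nat
    proof -
      have "min r ((1/2)^m) > 0"
        using \<open>r > 0\<close> by simp
      then show ?thesis
        using not_nbhd by blast
    qed
    then obtain a where "\<And>m. a m \<in> mball l (min r ((1/2)^m))" and a: "\<And>m. a m \<notin> U"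
      by metis
    then have "on_path_from mtopology l a"
      by (intro r) blast
    then show False
      using on_path_from_enters_open[OF _ U that] a by blast
  qed
  moreover have "U \<subseteq> M"
    using U by (simp add: openin_delta_kelley)
  ultimately show "openin mtopology U"
    by (simp add: openin_mtopology)
qed (rule openin_imp_delta_kelley)

definition unit_cube :: "nat \<Rightarrow> (nat \<Rightarrow> real) set" where
  "unit_cube n = {x. (\<forall>i\<ge>n. x i = 0) \<and> (\<forall>i<n. 0 \<le> x i \<and> x i \<le> 1)}"

lemma cube_top_eq: "cube_top n = subtopology (powertop_real UNIV) (unit_cube n)"
proof -
  have "{x. \<forall>i\<ge>n. x i = 0} \<inter> {x. \<forall>i<n. 0 \<le> x i \<and> x i \<le> 1} = unit_cube n"
    by (auto simp: unit_cube_def)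
  then show ?thesis
    unfolding cube_top_def Euclidean_space_def subtopology_subtopology by simp
qed

lemma topspace_cube_top [simp]: "topspace (cube_top n) = unit_cube n"
  by (simp add: cube_top_eq)

lemma continuous_map_cube_top_iff:
  "continuous_map X (cube_top n) f \<longleftrightarrow>
     (\<forall>i. continuous_map X euclideanreal (\<lambda>x. f x i)) \<and> f \<in> topspace X \<rightarrow> unit_cube n"
  by (simp add: cube_top_eq continuous_map_in_subtopology continuous_map_componentwise_UNIV)

lemma continuous_map_cube_top_coordinate: "continuous_map (cube_top n) euclideanreal (\<lambda>x. x i)"
  unfolding cube_top_eq
  by (rule continuous_map_from_subtopology) (metis UNIV_I continuous_map_product_coordinates)

lemma unit_cube_eq_PiE: "unit_cube n = PiE UNIV (\<lambda>i. if i < n then {0..1} else {0::real})"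
proof -
  have "x \<in> unit_cube n \<longleftrightarrow> (\<forall>i. x i \<in> (if i < n then {0..1} else {0}))" for x
  proof
    assume x: "\<forall>i. x i \<in> (if i < n then {0..1} else {0})"
    then have "x i = 0" if "n \<le> i" for i
      using that by (metis leD singletonD)
    moreover have "0 \<le> x i \<and> x i \<le> 1" if "i < n" for i
      using that x by (metis atLeastAtMost_iff)
    ultimately show "x \<in> unit_cube n"
      by (simp add: unit_cube_def)
  qed (simp add: unit_cube_def)
  then show ?thesis
    by (auto simp: PiE_UNIV_domain)
qed

lemma compact_space_cube_top: "compact_space (cube_top n)"
proof -
  have "compactin (powertop_real UNIV) (unit_cube n)"
    by (simp add: unit_cube_eq_PiE compactin_PiE)
  then show ?thesis
    unfolding cube_top_eq by (rule compact_space_subtopology)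
qed

definition l1_dist :: "nat \<Rightarrow> (nat \<Rightarrow> real) \<Rightarrow> (nat \<Rightarrow> real) \<Rightarrow> real" where
  "l1_dist n x y = (\<Sum>i<n. \<bar>x i - y i\<bar>)"

lemma l1_dist_commute: "l1_dist n x y = l1_dist n y x"
  unfolding l1_dist_def by (simp add: abs_minus_commute)

lemma l1_dist_self [simp]: "l1_dist n x x = 0"
  by (simp add: l1_dist_def)

lemma l1_dist_triangle: "l1_dist n x z \<le> l1_dist n x y + l1_dist n y z"
  unfolding l1_dist_def sum.distrib[symmetric] by (rule sum_mono) linarith

lemma abs_le_l1_dist: "i < n \<Longrightarrow> \<bar>x i - y i\<bar> \<le> l1_dist n x y"
  unfolding l1_dist_def by (rule member_le_sum) auto

lemma l1_dist_le_dim: "x \<in> unit_cube n \<Longrightarrow> y \<in> unit_cube n \<Longrightarrow> l1_dist n x y \<le> n"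
proof -
  assume "x \<in> unit_cube n" "y \<in> unit_cube n"
  then have "\<bar>x i - y i\<bar> \<le> 1" if "i < n" for i
  proof -
    have "0 \<le> x i" "x i \<le> 1" "0 \<le> y i" "y i \<le> 1"
      using that \<open>x \<in> unit_cube n\<close> \<open>y \<in> unit_cube n\<close> by (auto simp: unit_cube_def)
    then show ?thesis
      by linarith
  qed
  then have "l1_dist n x y \<le> (\<Sum>i<n. 1)"
    unfolding l1_dist_def by (intro sum_mono) simp
  then show ?thesis
    by simp
qed

lemma Metric_space_l1_dist: "Metric_space (unit_cube n) (l1_dist n)"
proof
  fix x y
  show "0 \<le> l1_dist n x y"
    by (simp add: l1_dist_def sum_nonneg)
  show "l1_dist n x y = l1_dist n y x"
    by (rule l1_dist_commute)
  assume x: "x \<in> unit_cube n" and y: "y \<in> unit_cube n"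
  show "l1_dist n x y = 0 \<longleftrightarrow> x = y"
  proof
    assume "l1_dist n x y = 0"
    then have "\<forall>i\<in>{..<n}. \<bar>x i - y i\<bar> = 0"
      unfolding l1_dist_def by (subst sum_nonneg_eq_0_iff[symmetric]) auto
    moreover have "x i = y i" if "n \<le> i" for i
      using x y that by (simp add: unit_cube_def)
    ultimately show "x = y"
      by (metis abs_eq_0 eq_iff_diff_eq_0 ext lessThan_iff not_le)
  qed (simp add: l1_dist_def)
qed (rule l1_dist_triangle)

lemma continuous_map_l1_dist: "continuous_map (cube_top n) euclideanreal (\<lambda>x. l1_dist n x y)"
  unfolding l1_dist_def
  by (intro continuous_map_sum continuous_map_real_abs continuous_map_diff
      continuous_map_cube_top_coordinate continuous_map_const[THEN iffD2]) auto

lemma mtopology_l1_dist: "Metric_space.mtopology (unit_cube n) (l1_dist n) = cube_top n"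
proof -
  interpret Metric_space "unit_cube n" "l1_dist n"
    by (rule Metric_space_l1_dist)
  have mball_open: "openin (cube_top n) (mball x r)" if "x \<in> unit_cube n" for x r
  proof -
    have "openin (cube_top n) {y \<in> topspace (cube_top n). l1_dist n y x \<in> {..<r}}"
      by (rule openin_continuous_map_preimage[OF continuous_map_l1_dist]) simp
    moreover have "{y \<in> topspace (cube_top n). l1_dist n y x \<in> {..<r}} = mball x r"
      using that by (auto simp: l1_dist_commute)
    ultimately show ?thesis
      by (simp only:)
  qed
  have "openin (cube_top n) U" if U: "openin mtopology U" for U
  proof (subst openin_subopen, intro ballI)
    fix x
    assume "x \<in> U"
    moreover have "U \<subseteq> unit_cube n" "\<forall>x\<in>U. \<exists>r>0. mball x r \<subseteq> U"
      using U by (simp_all add: openin_mtopology)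
    ultimately obtain r where "r > 0" "mball x r \<subseteq> U" and "x \<in> unit_cube n"
      by blast
    then show "\<exists>T. openin (cube_top n) T \<and> x \<in> T \<and> T \<subseteq> U"
      using mball_open[of x r] by (intro exI[of _ "mball x r"]) auto
  qed
  then have "cube_top n = mtopology"
    by (intro compact_Hausdorff_space_optimal Hausdorff_space_mtopology compact_space_cube_top)
       auto
  then show ?thesis
    by simp
qed

lemma topspace_compact_open: "topspace (compact_open e Y) = cmaps e Y"
proof -
  let ?B = "{{f \<in> cmaps e Y. f ` K \<subseteq> U} | K U. compactin (top_of_set {0..e}) K \<and> openin Y U}"
  have "{f \<in> cmaps e Y. f ` {} \<subseteq> topspace Y} \<in> ?B"
    by blast
  then have "\<Union>?B = cmaps e Y"
    by auto
  then show ?thesis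
    by (simp add: compact_open_def)
qed

lemma topspace_TOP: "topspace (TOP e Y) = cmaps e Y"
  by (simp add: TOP_def topspace_compact_open)

lemma openin_compact_open:
  assumes "compactin (top_of_set {0..e}) K" "openin Y U"
  shows "openin (compact_open e Y) {f \<in> cmaps e Y. f ` K \<subseteq> U}"
proof -
  have "openin (topology_generated_by
      {{f \<in> cmaps e Y. f ` K \<subseteq> U} | K U. compactin (top_of_set {0..e}) K \<and> openin Y U})
      {f \<in> cmaps e Y. f ` K \<subseteq> U}"
    using assms by (intro topology_generated_by_Basis) blast
  then have "openin (compact_open e Y) ({f \<in> cmaps e Y. f ` K \<subseteq> U} \<inter> cmaps e Y)"
    unfolding compact_open_def by (rule openin_subtopology_Int)
  then show ?thesis
    by (simp add: Int_absorb2)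
qed

lemma continuous_map_into_compact_open:
  assumes "g \<in> topspace X \<rightarrow> cmaps e Y"
    and "\<And>K U. compactin (top_of_set {0..e}) K \<Longrightarrow> openin Y U \<Longrightarrow>
           openin X {x \<in> topspace X. g x ` K \<subseteq> U}"
  shows "continuous_map X (compact_open e Y) g"
proof -
  let ?B = "{{f \<in> cmaps e Y. f ` K \<subseteq> U} | K U. compactin (top_of_set {0..e}) K \<and> openin Y U}"
  have "openin X (g -` V \<inter> topspace X)" if "V \<in> ?B" for V
  proof -
    obtain K U where "compactin (top_of_set {0..e}) K" "openin Y U"
      and V: "V = {f \<in> cmaps e Y. f ` K \<subseteq> U}"
      using \<open>V \<in> ?B\<close> by blast
    moreover have "g -` V \<inter> topspace X = {x \<in> topspace X. g x ` K \<subseteq> U}"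
      using assms(1) V by auto
    ultimately show ?thesis
      using assms(2) by simp
  qed
  moreover have "cmaps e Y \<subseteq> \<Union>?B"
    using topspace_compact_open[of e Y] by (auto simp: compact_open_def)
  ultimately have "continuous_map X (topology_generated_by ?B) g"
    using assms(1) by (intro continuous_on_generated_topo) auto
  then show ?thesis
    using assms(1) by (auto simp: compact_open_def continuous_map_in_subtopology)
qed

lemma l1_dist_natural_path:
  assumes mono: "\<forall>i<n. mono_on {0..e} (\<lambda>t. \<phi> t i)"
    and sum_eq: "\<forall>t\<in>{0..e}. (\<Sum>i<n. \<phi> t i) = t"
    and "s \<in> {0..e}" "t \<in> {0..e}"
  shows "l1_dist n (\<phi> s) (\<phi> t) = \<bar>s - t\<bar>"
proof -
  have le: "l1_dist n (\<phi> s) (\<phi> t) = t - s" if "s \<in> {0..e}" "t \<in> {0..e}" "s \<le> t" for s t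
  proof -
    have "\<phi> s i \<le> \<phi> t i" if "i < n" for i
      using mono_onD[of "{0..e}" "\<lambda>t. \<phi> t i"] mono \<open>i < n\<close> \<open>s \<in> {0..e}\<close> \<open>t \<in> {0..e}\<close> \<open>s \<le> t\<close>
      by blast
    then have "l1_dist n (\<phi> s) (\<phi> t) = (\<Sum>i<n. \<phi> t i - \<phi> s i)"
      unfolding l1_dist_def by (intro sum.cong) auto
    also have "\<dots> = t - s"
      using sum_eq that by (simp add: sum_subtractf)
    finally show ?thesis .
  qed
  show ?thesis
    using le[of s t] le[of t s] assms(3,4) by (cases "s \<le> t") (auto simp: l1_dist_commute)
qed

lemma mem_N_set_iff:
  "\<phi> \<in> N_set n e \<longleftrightarrow> \<phi> \<in> extensional {0..e} \<and> (\<forall>t\<in>{0..e}. \<phi> t \<in> unit_cube n) \<and>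
     (\<forall>i<n. mono_on {0..e} (\<lambda>t. \<phi> t i)) \<and> (\<forall>t\<in>{0..e}. (\<Sum>i<n. \<phi> t i) = t)"
    (is "_ \<longleftrightarrow> ?natural")
proof
  assume "\<phi> \<in> N_set n e"
  then show ?natural
    unfolding N_set_def topspace_TOP cmaps_def continuous_map_def by auto
next
  assume natural: ?natural
  have "continuous_on {0..e} (\<lambda>t. \<phi> t i)" for i
  proof (cases "i < n")
    case True
    have "dist (\<phi> s i) (\<phi> t i) \<le> 1 * dist s t" if "s \<in> {0..e}" "t \<in> {0..e}" for s t
      using abs_le_l1_dist[OF True, of "\<phi> s" "\<phi> t"] l1_dist_natural_path[of n e \<phi> s t]
        natural that by (simp add: dist_real_def)
    then show ?thesis
      by (intro lipschitz_on_continuous_on[where L=1] lipschitz_onI) auto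
  next
    case False
    then have "\<forall>t\<in>{0..e}. \<phi> t i = 0"
      using natural by (auto simp: unit_cube_def)
    then show ?thesis
      using continuous_on_eq[OF continuous_on_const[of "{0..e}" 0]] by metis
  qed
  then have "continuous_map (top_of_set {0..e}) (cube_top n) \<phi>"
    using natural by (auto simp: continuous_map_cube_top_iff)
  then show "\<phi> \<in> N_set n e"
    using natural by (simp add: N_set_def topspace_TOP cmaps_def)
qed

lemma N_set_extensional: "\<phi> \<in> N_set n e \<Longrightarrow> \<phi> \<in> extensional {0..e}"
  and N_set_unit_cube: "\<phi> \<in> N_set n e \<Longrightarrow> t \<in> {0..e} \<Longrightarrow> \<phi> t \<in> unit_cube n"
  and N_set_mono: "\<phi> \<in> N_set n e \<Longrightarrow> i < n \<Longrightarrow> mono_on {0..e} (\<lambda>t. \<phi> t i)"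
  and N_set_sum: "\<phi> \<in> N_set n e \<Longrightarrow> t \<in> {0..e} \<Longrightarrow> (\<Sum>i<n. \<phi> t i) = t"
  by (auto simp: mem_N_set_iff)

lemma N_set_subset_cmaps: "N_set n e \<subseteq> cmaps e (cube_top n)"
  unfolding N_set_def topspace_TOP by auto

lemma l1_dist_N_set:
  "\<phi> \<in> N_set n e \<Longrightarrow> s \<in> {0..e} \<Longrightarrow> t \<in> {0..e} \<Longrightarrow> l1_dist n (\<phi> s) (\<phi> t) = \<bar>s - t\<bar>"
  by (rule l1_dist_natural_path) (auto simp: mem_N_set_iff)

definition convex_comb :: "real \<Rightarrow> (real \<Rightarrow> nat \<Rightarrow> real) \<Rightarrow> (real \<Rightarrow> nat \<Rightarrow> real) \<Rightarrow>
    real \<Rightarrow> nat \<Rightarrow> real" where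
  "convex_comb u f g = (\<lambda>t i. (1 - u) * f t i + u * g t i)"

lemma convex_comb_N_set:
  assumes f: "f \<in> N_set n e" and g: "g \<in> N_set n e" and "0 \<le> u" "u \<le> 1"
  shows "convex_comb u f g \<in> N_set n e"
  unfolding mem_N_set_iff
proof (intro conjI ballI allI impI)
  have "convex_comb u f g t = undefined" if "t \<notin> {0..e}" for t
    using that N_set_extensional[OF f] N_set_extensional[OF g]
    by (simp add: convex_comb_def extensional_def algebra_simps)
  then show "convex_comb u f g \<in> extensional {0..e}"
    by (simp add: extensional_def)
next
  fix t
  assume t: "t \<in> {0..e}"
  have "f t \<in> unit_cube n" "g t \<in> unit_cube n"
    using f g t by (simp_all add: N_set_unit_cube)
  then show "convex_comb u f g t \<in> unit_cube n"
    using \<open>0 \<le> u\<close> \<open>u \<le> 1\<close>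
    by (auto simp: unit_cube_def convex_comb_def intro!: convex_bound_le)
  have "(\<Sum>i<n. convex_comb u f g t i) = (1 - u) * (\<Sum>i<n. f t i) + u * (\<Sum>i<n. g t i)"
    by (simp add: convex_comb_def sum.distrib sum_distrib_left)
  then show "(\<Sum>i<n. convex_comb u f g t i) = t"
    using N_set_sum[OF f t] N_set_sum[OF g t] by (simp add: algebra_simps)
next
  fix i
  assume "i < n"
  show "mono_on {0..e} (\<lambda>t. convex_comb u f g t i)"
  proof (rule mono_onI)
    fix r s
    assume rs: "r \<in> {0..e}" "s \<in> {0..e}" "r \<le> s"
    have "f r i \<le> f s i" "g r i \<le> g s i"
      using mono_onD[OF N_set_mono[OF f \<open>i < n\<close>] rs] mono_onD[OF N_set_mono[OF g \<open>i < n\<close>] rs]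
      by simp_all
    then show "convex_comb u f g r i \<le> convex_comb u f g s i"
      using \<open>0 \<le> u\<close> \<open>u \<le> 1\<close> by (simp add: convex_comb_def add_mono mult_left_mono)
  qed
qed

lemma closedin_Collect_Ball_continuous:
  assumes "\<And>a. a \<in> A \<Longrightarrow> continuous_map X euclideanreal (g a)" "\<And>a. a \<in> A \<Longrightarrow> closed (C a)"
  shows "closedin X {x \<in> topspace X. \<forall>a\<in>A. g a x \<in> C a}"
proof -
  have eq: "{x \<in> topspace X. \<forall>a\<in>A. g a x \<in> C a}
      = \<Inter> (insert (topspace X) ((\<lambda>a. {x \<in> topspace X. g a x \<in> C a}) ` A))"
    by blast
  have pre: "closedin X {x \<in> topspace X. g a x \<in> C a}" if "a \<in> A" for a
    using assms(2)[OF that] closed_closedin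
    by (blast intro: closedin_continuous_map_preimage[OF assms(1)[OF that]])
  have "closedin X (\<Inter> (insert (topspace X) ((\<lambda>a. {x \<in> topspace X. g a x \<in> C a}) ` A)))"
    by (rule closedin_Inter) (use pre in blast)+
  then show ?thesis
    unfolding eq .
qed

lemma continuous_map_product_cube_evaluation:
  assumes "t \<in> T"
  shows "continuous_map (product_topology (\<lambda>_. cube_top n) T) euclideanreal (\<lambda>f. f t i)"
  using continuous_map_compose[OF continuous_map_product_projection[OF assms]
      continuous_map_cube_top_coordinate]
  by (simp add: o_def)

lemma closedin_N_set:
  "closedin (product_topology (\<lambda>_. cube_top n) {0..e}) (N_set n e)"
proof -
  let ?P = "product_topology (\<lambda>_. cube_top n) {0..e}"
  note evaluation = continuous_map_product_cube_evaluation[of _ "{0..e}" n]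
  define A where "A = {(i, s, t). i < n \<and> s \<in> {0..e} \<and> t \<in> {0..e} \<and> s \<le> t}"
  have "closedin ?P {f \<in> topspace ?P. \<forall>a\<in>A. (case a of (i, s, t) \<Rightarrow> f t i - f s i) \<in> {0..}}"
  proof (rule closedin_Collect_Ball_continuous)
    fix a
    assume "a \<in> A"
    then obtain i s t where "a = (i, s, t)" "s \<in> {0..e}" "t \<in> {0..e}"
      by (auto simp: A_def)
    then show "continuous_map ?P euclideanreal (\<lambda>f. case a of (i, s, t) \<Rightarrow> f t i - f s i)"
      by (simp add: continuous_map_diff evaluation)
  qed simp
  moreover have "closedin ?P {f \<in> topspace ?P. \<forall>t\<in>{0..e}. (\<Sum>i<n. f t i) - t \<in> {0}}"
    by (intro closedin_Collect_Ball_continuous continuous_map_diff continuous_map_sum evaluation)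
       auto
  moreover have "N_set n e = {f \<in> topspace ?P. \<forall>a\<in>A. (case a of (i, s, t) \<Rightarrow> f t i - f s i) \<in> {0..}}
      \<inter> {f \<in> topspace ?P. \<forall>t\<in>{0..e}. (\<Sum>i<n. f t i) - t \<in> {0}}"
    by (auto simp: mem_N_set_iff A_def mono_on_def PiE_iff)
  ultimately show ?thesis
    by (simp add: closedin_Int)
qed

locale natural_paths =
  fixes n :: nat and e :: real
  assumes e_nonneg: "0 \<le> e"
begin

definition path_dist :: "(real \<Rightarrow> nat \<Rightarrow> real) \<Rightarrow> (real \<Rightarrow> nat \<Rightarrow> real) \<Rightarrow> real" where
  "path_dist f g = (if f \<in> N_set n e \<and> g \<in> N_set n e
     then (SUP t\<in>{0..e}. l1_dist n (f t) (g t)) else 0)"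

lemma l1_dist_le_path_dist:
  assumes "f \<in> N_set n e" "g \<in> N_set n e" "t \<in> {0..e}"
  shows "l1_dist n (f t) (g t) \<le> path_dist f g"
proof -
  have "bdd_above ((\<lambda>t. l1_dist n (f t) (g t)) ` {0..e})"
  proof (rule bdd_aboveI2)
    show "l1_dist n (f t) (g t) \<le> n" if "t \<in> {0..e}" for t
      using assms(1,2) that by (intro l1_dist_le_dim N_set_unit_cube)
  qed
  then have "l1_dist n (f t) (g t) \<le> (SUP t\<in>{0..e}. l1_dist n (f t) (g t))"
    by (rule cSUP_upper[OF assms(3)])
  then show ?thesis
    using assms by (simp add: path_dist_def)
qed

lemma path_dist_le:
  assumes "f \<in> N_set n e" "g \<in> N_set n e" "\<And>t. t \<in> {0..e} \<Longrightarrow> l1_dist n (f t) (g t) \<le> c"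
  shows "path_dist f g \<le> c"
proof -
  have "(SUP t\<in>{0..e}. l1_dist n (f t) (g t)) \<le> c"
    by (rule cSUP_least) (use assms(3) e_nonneg in auto)
  then show ?thesis
    using assms(1,2) by (simp add: path_dist_def)
qed

lemma path_dist_nonneg: "0 \<le> path_dist f g"
proof (cases "f \<in> N_set n e \<and> g \<in> N_set n e")
  case True
  then have "l1_dist n (f 0) (g 0) \<le> path_dist f g"
    using e_nonneg by (simp add: l1_dist_le_path_dist)
  moreover have "0 \<le> l1_dist n (f 0) (g 0)"
    by (simp add: l1_dist_def sum_nonneg)
  ultimately show ?thesis
    by linarith
qed (auto simp: path_dist_def)

lemma abs_le_path_dist:
  assumes "f \<in> N_set n e" "g \<in> N_set n e"
  shows "\<bar>f t i - g t i\<bar> \<le> path_dist f g"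
proof (cases "t \<in> {0..e} \<and> i < n")
  case True
  then show ?thesis
    using abs_le_l1_dist l1_dist_le_path_dist[OF assms] order_trans by blast
next
  case False
  have "f t i = g t i"
  proof (cases "t \<in> {0..e}")
    case True
    then have "f t \<in> unit_cube n" "g t \<in> unit_cube n" "n \<le> i"
      using assms False by (auto intro: N_set_unit_cube)
    then show ?thesis
      by (simp add: unit_cube_def)
  next
    case False
    then show ?thesis
      using assms N_set_extensional by (metis extensional_arb)
  qed
  then show ?thesis
    using path_dist_nonneg by simp
qed

sublocale Metric_space "N_set n e" path_dist
proof
  show "path_dist f g = path_dist g f" for f g
    by (simp add: path_dist_def l1_dist_commute conj_commute)
  show "path_dist f g = 0 \<longleftrightarrow> f = g" if "f \<in> N_set n e" "g \<in> N_set n e" for f g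
  proof
    assume "path_dist f g = 0"
    then show "f = g"
      using abs_le_path_dist[OF that] by (intro ext) (metis abs_le_zero_iff eq_iff_diff_eq_0)
  qed (use that e_nonneg in \<open>simp add: path_dist_def\<close>)
  show "path_dist f h \<le> path_dist f g + path_dist g h"
    if "f \<in> N_set n e" "g \<in> N_set n e" "h \<in> N_set n e" for f g h
  proof (rule path_dist_le[OF that(1,3)])
    fix t
    assume "t \<in> {0..e}"
    have "l1_dist n (f t) (h t) \<le> l1_dist n (f t) (g t) + l1_dist n (g t) (h t)"
      by (rule l1_dist_triangle)
    also have "\<dots> \<le> path_dist f g + path_dist g h"
      using that \<open>t \<in> {0..e}\<close> by (intro add_mono l1_dist_le_path_dist)
    finally show "l1_dist n (f t) (h t) \<le> path_dist f g + path_dist g h" .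
  qed
qed (rule path_dist_nonneg)

section \<open>The pointwise, compact-open and uniform topologies coincide\<close>

definition pointwise_top :: "(real \<Rightarrow> nat \<Rightarrow> real) topology" where
  "pointwise_top = subtopology (product_topology (\<lambda>_. cube_top n) {0..e}) (N_set n e)"

lemma topspace_pointwise_top: "topspace pointwise_top = N_set n e"
  using N_set_extensional N_set_unit_cube
  by (fastforce simp: pointwise_top_def PiE_iff)

lemma compact_space_pointwise_top: "compact_space pointwise_top"
proof -
  have "compact_space (product_topology (\<lambda>_. cube_top n) {0..e})"
    by (simp add: compact_space_product_topology compact_space_cube_top)
  then show ?thesis
    unfolding pointwise_top_def
    by (intro compact_space_subtopology closedin_compact_space closedin_N_set)
qed

lemma continuous_map_pointwise_top_evaluation:
  "t \<in> {0..e} \<Longrightarrow> continuous_map pointwise_top euclideanreal (\<lambda>g. g t i)"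
  unfolding pointwise_top_def
  by (intro continuous_map_from_subtopology continuous_map_product_cube_evaluation)

lemma continuous_map_pointwise_top_l1_dist:
  assumes "t \<in> {0..e}"
  shows "continuous_map pointwise_top euclideanreal (\<lambda>g. l1_dist n (g t) y)"
proof -
  have "continuous_map pointwise_top (cube_top n) (\<lambda>g. g t)"
    unfolding pointwise_top_def
    by (intro continuous_map_from_subtopology continuous_map_product_projection assms)
  then show ?thesis
    using continuous_map_compose[OF _ continuous_map_l1_dist] by (simp add: o_def)
qed

text \<open>Natural d-paths are 1-Lipschitz, so closeness on a \<open>\<delta>\<close>-net of \<open>[0, e]\<close> forces
  uniform closeness.\<close>

lemma path_dist_le_on_net:
  assumes f: "f \<in> N_set n e" and g: "g \<in> N_set n e"
    and T: "T \<subseteq> {0..e}" "{0..e} \<subseteq> (\<Union>t\<in>T. ball t \<delta>)"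
    and close: "\<And>t. t \<in> T \<Longrightarrow> l1_dist n (f t) (g t) \<le> \<delta>"
  shows "path_dist f g \<le> 3 * \<delta>"
proof (rule path_dist_le[OF f g])
  fix s
  assume "s \<in> {0..e}"
  have "s \<in> (\<Union>t\<in>T. ball t \<delta>)"
    using T(2) \<open>s \<in> {0..e}\<close> by (rule subsetD)
  then obtain t where "t \<in> T" and st: "dist t s < \<delta>"
    by (meson UN_E mem_ball)
  then have t: "t \<in> {0..e}"
    using T(1) by blast
  have "l1_dist n (f s) (g s) \<le> l1_dist n (f s) (f t) + l1_dist n (f t) (g s)"
    by (rule l1_dist_triangle)
  also have "\<dots> \<le> l1_dist n (f s) (f t) + (l1_dist n (f t) (g t) + l1_dist n (g t) (g s))"
    by (intro add_left_mono l1_dist_triangle)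
  also have "\<dots> \<le> \<delta> + (\<delta> + \<delta>)"
    using f g t \<open>s \<in> {0..e}\<close> st close[OF \<open>t \<in> T\<close>]
    by (intro add_mono) (simp_all add: l1_dist_N_set dist_real_def abs_minus_commute)
  finally show "l1_dist n (f s) (g s) \<le> 3 * \<delta>"
    by simp
qed

lemma pointwise_nbhd_subset_mball:
  assumes f: "f \<in> N_set n e" and "r > 0"
  shows "\<exists>W. openin pointwise_top W \<and> f \<in> W \<and> W \<subseteq> mball f r"
proof -
  have "{0..e} \<subseteq> (\<Union>t\<in>{0..e}. ball t (r/4))"
  proof
    fix s
    assume "s \<in> {0..e}"
    then show "s \<in> (\<Union>t\<in>{0..e}. ball t (r/4))"
      using \<open>r > 0\<close> by (intro UN_I[of s]) auto
  qed
  then obtain T where T: "T \<subseteq> {0..e}" "finite T" "{0..e} \<subseteq> (\<Union>t\<in>T. ball t (r/4))"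
    using compactE_image[OF compact_Icc, where C="{0..e}" and f="\<lambda>t. ball t (r/4)"] open_ball
    by blast
  define W where "W = (\<Inter>t\<in>T. {g \<in> topspace pointwise_top. l1_dist n (g t) (f t) \<in> {..<r/4}})
      \<inter> topspace pointwise_top"
  have "openin pointwise_top {g \<in> topspace pointwise_top. l1_dist n (g t) (f t) \<in> {..<r/4}}"
    if "t \<in> T" for t
    using T(1) that
    by (intro openin_continuous_map_preimage[OF continuous_map_pointwise_top_l1_dist]) auto
  then have "openin pointwise_top W"
    unfolding W_def by (intro openin_INT T(2))
  moreover have "f \<in> W"
    using f \<open>r > 0\<close> by (auto simp: W_def topspace_pointwise_top)
  moreover have "g \<in> mball f r" if "g \<in> W" for g
  proof -
    have g: "g \<in> N_set n e"
      using that by (simp add: W_def topspace_pointwise_top)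
    have "l1_dist n (f t) (g t) \<le> r/4" if "t \<in> T" for t
      using \<open>g \<in> W\<close> that by (fastforce simp: W_def l1_dist_commute)
    then have "path_dist f g \<le> 3 * (r/4)"
      using f g T(1,3) by (intro path_dist_le_on_net)
    then show ?thesis
      using f g \<open>r > 0\<close> by simp
  qed
  ultimately show ?thesis
    by blast
qed

lemma pointwise_top_eq_mtopology: "pointwise_top = mtopology"
proof -
  have opens: "openin pointwise_top U" if U: "openin mtopology U" for U
  proof (subst openin_subopen, intro ballI)
    fix f
    assume "f \<in> U"
    moreover have "U \<subseteq> N_set n e" "\<forall>x\<in>U. \<exists>r>0. mball x r \<subseteq> U"
      using U by (simp_all add: openin_mtopology)
    ultimately obtain r where "r > 0" "mball f r \<subseteq> U" "f \<in> N_set n e"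
      by blast
    moreover obtain W where "openin pointwise_top W" "f \<in> W" "W \<subseteq> mball f r"
      by (meson pointwise_nbhd_subset_mball calculation)
    ultimately show "\<exists>W. openin pointwise_top W \<and> f \<in> W \<and> W \<subseteq> U"
      by (meson order_trans)
  qed
  show ?thesis
    by (rule compact_Hausdorff_space_optimal[OF _ opens Hausdorff_space_mtopology
        compact_space_pointwise_top]) (simp add: topspace_pointwise_top)
qed

definition compact_open_top :: "(real \<Rightarrow> nat \<Rightarrow> real) topology" where
  "compact_open_top = subtopology (compact_open e (cube_top n)) (N_set n e)"

lemma topspace_compact_open_top: "topspace compact_open_top = N_set n e"
  using N_set_subset_cmaps by (auto simp: compact_open_top_def topspace_compact_open)

text \<open>The radius is a Lebesgue number of the cover \<open>{V}\<close> of the compact set \<open>f ` K\<close>.\<close>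

lemma mball_maps_into_open:
  assumes K: "compactin (top_of_set {0..e}) K" and V: "openin (cube_top n) V"
    and f: "f \<in> N_set n e" "f ` K \<subseteq> V"
  shows "\<exists>r>0. \<forall>g\<in>mball f r. g ` K \<subseteq> V"
proof -
  interpret cube: Metric_space "unit_cube n" "l1_dist n"
    by (rule Metric_space_l1_dist)
  have "f \<in> cmaps e (cube_top n)"
    using f(1) N_set_subset_cmaps by blast
  then have "continuous_map (top_of_set {0..e}) cube.mtopology f"
    by (simp add: cmaps_def mtopology_l1_dist)
  then have "compactin cube.mtopology (f ` K)"
    by (rule image_compactin[OF K])
  moreover have "openin cube.mtopology V"
    using V by (simp add: mtopology_l1_dist)
  ultimately have "\<exists>r>0. \<forall>x\<in>f ` K. \<exists>W\<in>{V}. cube.mball x r \<subseteq> W"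
    using f(2) by (intro cube.lebesgue_number) auto
  then obtain r where "r > 0" and r: "\<forall>x\<in>f ` K. cube.mball x r \<subseteq> V"
    by auto
  have "g ` K \<subseteq> V" if g: "g \<in> mball f r" for g
  proof
    fix y
    assume "y \<in> g ` K"
    then obtain s where "s \<in> K" "y = g s"
      by blast
    moreover have "s \<in> {0..e}"
      using K \<open>s \<in> K\<close> by (auto simp: compactin_subtopology)
    moreover have "g \<in> N_set n e" "path_dist f g < r"
      using g by simp_all
    ultimately have "f s \<in> unit_cube n" "g s \<in> unit_cube n" "l1_dist n (f s) (g s) < r"
      using f(1) l1_dist_le_path_dist[of f g s] by (simp_all add: N_set_unit_cube)
    then have "y \<in> cube.mball (f s) r"
      using \<open>y = g s\<close> by simp
    moreover have "f s \<in> f ` K"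
      using \<open>s \<in> K\<close> by (rule imageI)
    ultimately show "y \<in> V"
      using r by (meson subsetD)
  qed
  then show ?thesis
    using \<open>r > 0\<close> by blast
qed

lemma openin_compact_open_top_imp_mtopology:
  assumes "openin compact_open_top U"
  shows "openin mtopology U"
proof -
  have "openin mtopology {f \<in> topspace mtopology. f ` K \<subseteq> V}"
    if K: "compactin (top_of_set {0..e}) K" and V: "openin (cube_top n) V" for K V
  proof (subst openin_mtopology, intro conjI allI impI)
    fix f
    assume "f \<in> {f \<in> topspace mtopology. f ` K \<subseteq> V}"
    then have "f \<in> N_set n e" "f ` K \<subseteq> V"
      by auto
    then obtain r where "r > 0" and r: "\<forall>g\<in>mball f r. g ` K \<subseteq> V"
      using mball_maps_into_open[OF K V] by blast
    have "mball f r \<subseteq> {f \<in> topspace mtopology. f ` K \<subseteq> V}"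
    proof
      fix g
      assume "g \<in> mball f r"
      then show "g \<in> {f \<in> topspace mtopology. f ` K \<subseteq> V}"
        using r by simp
    qed
    then show "\<exists>r>0. mball f r \<subseteq> {f \<in> topspace mtopology. f ` K \<subseteq> V}"
      using \<open>r > 0\<close> by (intro exI[of _ r]) simp
  qed auto
  then have "continuous_map mtopology (compact_open e (cube_top n)) id"
    using N_set_subset_cmaps[of n e] by (intro continuous_map_into_compact_open) auto
  then have "continuous_map mtopology compact_open_top id"
    by (simp add: compact_open_top_def continuous_map_in_subtopology)
  then show ?thesis
    using topology_finer_continuous_id[of compact_open_top mtopology] assms
    by (simp add: topspace_compact_open_top)
qed

lemma openin_pointwise_top_imp_compact_open_top:
  assumes "openin pointwise_top U"
  shows "openin compact_open_top U"
proof -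
  have "continuous_map compact_open_top (cube_top n) (\<lambda>f. f t)" if "t \<in> {0..e}" for t
    unfolding continuous_map_def
  proof (intro conjI allI impI)
    fix V
    assume "openin (cube_top n) V"
    then have "openin (compact_open e (cube_top n)) {f \<in> cmaps e (cube_top n). f ` {t} \<subseteq> V}"
      using that by (intro openin_compact_open) auto
    then have "openin compact_open_top ({f \<in> cmaps e (cube_top n). f ` {t} \<subseteq> V} \<inter> N_set n e)"
      unfolding compact_open_top_def by (rule openin_subtopology_Int)
    moreover have "{f \<in> cmaps e (cube_top n). f ` {t} \<subseteq> V} \<inter> N_set n e
        = {f \<in> topspace compact_open_top. f t \<in> V}"
      using N_set_subset_cmaps by (auto simp: topspace_compact_open_top)
    ultimately show "openin compact_open_top {f \<in> topspace compact_open_top. f t \<in> V}"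
      by (simp only:)
  qed (use that N_set_unit_cube in \<open>force simp: topspace_compact_open_top\<close>)
  then have "continuous_map compact_open_top pointwise_top id"
    using N_set_extensional
    by (auto simp: pointwise_top_def continuous_map_in_subtopology continuous_map_componentwise
        topspace_compact_open_top)
  then show ?thesis
    using topology_finer_continuous_id[of pointwise_top compact_open_top] assms
    by (simp add: topspace_compact_open_top topspace_pointwise_top)
qed

lemma compact_open_top_eq_mtopology: "compact_open_top = mtopology"
  unfolding topology_eq
proof (intro allI iffI)
  show "openin mtopology U" if "openin compact_open_top U" for U
    using that by (rule openin_compact_open_top_imp_mtopology)
  show "openin compact_open_top U" if "openin mtopology U" for U
    using that pointwise_top_eq_mtopology by (simp add: openin_pointwise_top_imp_compact_open_top)
qed

end

section \<open>Paths through convergent sequences\<close>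

text \<open>Tent functions with pairwise disjoint supports \<open>](1/2)^m/2, (1/2)^m[\<close>, peaking at the
  centre of the support.\<close>

definition bump_centre :: "nat \<Rightarrow> real" where
  "bump_centre m = 3 * (1/2)^m / 4"

definition bump :: "nat \<Rightarrow> real \<Rightarrow> real" where
  "bump m s = max 0 (1 - 4 * 2^m * \<bar>s - bump_centre m\<bar>)"

lemma bump_centre_tendsto_zero: "bump_centre \<longlonglongrightarrow> 0"
  unfolding bump_centre_def
  by (intro tendsto_eq_intros LIMSEQ_power_zero) auto

lemma bump_centre_in_unit_interval: "bump_centre m \<in> {0..1}"
proof -
  have "(1/2::real)^m \<le> 1"
    by (simp add: power_le_one)
  then show ?thesis
    by (simp add: bump_centre_def)
qed

lemma bump_nonneg: "0 \<le> bump m s"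
  by (simp add: bump_def)

lemma bump_le_one: "bump m s \<le> 1"
  by (simp add: bump_def)

lemma bump_at_centre: "bump m (bump_centre m) = 1"
  by (simp add: bump_def)

lemma bump_at_zero: "bump m 0 = 0"
proof -
  have "4 * 2^m * \<bar>0 - bump_centre m\<bar> = (3::real)"
    by (simp add: bump_centre_def power_one_over field_simps)
  then show ?thesis
    by (simp add: bump_def)
qed

lemma continuous_on_bump: "continuous_on S (bump m)"
  unfolding bump_def by (intro continuous_intros)

lemma bump_support:
  assumes "bump m s \<noteq> 0"
  shows "(1/2)^m / 2 < s \<and> s < (1/2)^m"
proof -
  have "4 * 2^m * \<bar>s - bump_centre m\<bar> < 1"
    using assms by (auto simp: bump_def max_def split: if_splits)
  then have "\<bar>s - bump_centre m\<bar> < (1/2)^m / 4"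
    by (simp add: power_one_over field_simps)
  then have "s - bump_centre m < (1/2)^m / 4" "bump_centre m - s < (1/2)^m / 4"
    by (metis abs_less_iff minus_diff_eq)+
  then show ?thesis
    unfolding bump_centre_def by linarith
qed

lemma bump_disjoint:
  assumes "bump m s \<noteq> 0" "bump m' s \<noteq> 0"
  shows "m = m'"
proof (rule ccontr)
  assume "m \<noteq> m'"
  moreover have False if "bump p s \<noteq> 0" "bump q s \<noteq> 0" "p < q" for p q
  proof -
    have "(1/2::real)^q \<le> (1/2)^(Suc p)"
      using that(3) by (intro power_decreasing) auto
    then show False
      using bump_support[OF that(1)] bump_support[OF that(2)] by simp
  qed
  ultimately show False
    using assms by (metis linorder_neqE_nat)
qed

lemma suminf_bump_single:
  assumes "bump m s \<noteq> 0"
  shows "suminf (\<lambda>m'. bump m' s * b m') = bump m s * b m"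
proof -
  have "bump m' s * b m' = 0" if "m' \<noteq> m" for m'
    using bump_disjoint[OF assms, of m'] that by auto
  then show ?thesis
    by (subst suminf_finite[of "{m}"]) auto
qed

lemma continuous_on_bump_series:
  assumes "\<And>m. \<bar>b m\<bar> \<le> C * (1/2)^m"
  shows "continuous_on S (\<lambda>s. suminf (\<lambda>m. bump m s * b m))"
proof -
  have "uniform_limit S (\<lambda>N s. \<Sum>m<N. bump m s * b m) (\<lambda>s. suminf (\<lambda>m. bump m s * b m)) sequentially"
  proof (rule Weierstrass_m_test)
    show "norm (bump m s * b m) \<le> C * (1/2)^m" for m s
    proof -
      have "bump m s * \<bar>b m\<bar> \<le> \<bar>b m\<bar>"
        using bump_nonneg[of m s] bump_le_one[of m s] by (intro mult_left_le_one_le) auto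
      then show ?thesis
        using assms[of m] bump_nonneg[of m s] by (simp add: abs_mult)
    qed
    show "summable (\<lambda>m. C * (1/2::real)^m)"
      by (intro summable_mult summable_geometric) simp
  qed
  then show ?thesis
    by (rule uniform_limit_theorem[rotated])
       (auto intro!: always_eventually continuous_on_sum continuous_on_mult_right continuous_on_bump)
qed

text \<open>Starting at \<open>l\<close>, the path goes to \<open>a m\<close> and back along a segment while \<open>s\<close> runs through
  the support of \<open>bump m\<close>.\<close>

definition sequence_path ::
    "(real \<Rightarrow> nat \<Rightarrow> real) \<Rightarrow> (nat \<Rightarrow> real \<Rightarrow> nat \<Rightarrow> real) \<Rightarrow> real \<Rightarrow> real \<Rightarrow> nat \<Rightarrow> real" where
  "sequence_path l a s = (\<lambda>t i. l t i + suminf (\<lambda>m. bump m s * (a m t i - l t i)))"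

lemma sequence_path_zero: "sequence_path l a 0 = l"
  by (simp add: sequence_path_def bump_at_zero)

lemma sequence_path_eq_convex_comb: "\<exists>m. sequence_path l a s = convex_comb (bump m s) l (a m)"
proof (cases "\<exists>m. bump m s \<noteq> 0")
  case True
  then obtain m where "bump m s \<noteq> 0"
    by blast
  then have "sequence_path l a s = convex_comb (bump m s) l (a m)"
    unfolding sequence_path_def convex_comb_def suminf_bump_single[OF \<open>bump m s \<noteq> 0\<close>]
    by (simp add: algebra_simps)
  then show ?thesis
    by blast
next
  case False
  then have "sequence_path l a s = convex_comb (bump 0 s) l (a 0)"
    by (simp add: sequence_path_def convex_comb_def)
  then show ?thesis
    by blast
qed

lemma sequence_path_at_centre: "sequence_path l a (bump_centre m) = a m"
proof -
  have "bump m (bump_centre m) \<noteq> 0"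
    by (simp add: bump_at_centre)
  then show ?thesis
    unfolding sequence_path_def suminf_bump_single[OF \<open>bump m (bump_centre m) \<noteq> 0\<close>]
    by (simp add: bump_at_centre)
qed

lemma continuous_on_sequence_path:
  assumes "\<And>m. \<bar>a m t i - l t i\<bar> \<le> C * (1/2)^m"
  shows "continuous_on S (\<lambda>s. sequence_path l a s t i)"
  unfolding sequence_path_def
  by (intro continuous_on_add continuous_on_const continuous_on_bump_series[where C=C] assms)

section \<open>Delta-generatedness\<close>

context natural_paths
begin

lemma continuous_map_sequence_path:
  assumes S: "S \<subseteq> N_set n e" and l: "l \<in> N_set n e"
    and a: "\<And>m. a m \<in> N_set n e" "\<And>m. path_dist l (a m) \<le> (1/2)^m"
    and in_S: "\<And>s. sequence_path l a s \<in> S"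
  shows "continuous_map (top_of_set T) (subtopology mtopology S) (sequence_path l a)"
proof -
  have "continuous_map (top_of_set T) (cube_top n) (\<lambda>s. sequence_path l a s t)"
    if "t \<in> {0..e}" for t
    unfolding continuous_map_cube_top_iff
  proof (intro conjI allI)
    show "continuous_map (top_of_set T) euclideanreal (\<lambda>s. sequence_path l a s t i)" for i
    proof -
      have "\<bar>a m t i - l t i\<bar> \<le> 1 * (1/2)^m" for m
        using abs_le_path_dist[OF a(1)[of m] l, where t=t and i=i] a(2)[of m] commute[of "a m" l]
        by linarith
      then have "continuous_on T (\<lambda>s. sequence_path l a s t i)"
        by (rule continuous_on_sequence_path)
      then show ?thesis
        by simp
    qed
    show "(\<lambda>s. sequence_path l a s t) \<in> topspace (top_of_set T) \<rightarrow> unit_cube n"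
      using in_S S that N_set_unit_cube by blast
  qed
  moreover have "sequence_path l a s \<in> extensional {0..e}" for s
    using in_S S N_set_extensional by blast
  ultimately have "continuous_map (top_of_set T) (product_topology (\<lambda>_. cube_top n) {0..e})
      (sequence_path l a)"
    by (auto simp: continuous_map_componentwise)
  then show ?thesis
    using in_S S
    by (simp add: pointwise_top_eq_mtopology[symmetric] pointwise_top_def subtopology_subtopology
        continuous_map_in_subtopology Int_absorb1)
qed

lemma on_path_from_sequence_path:
  assumes S: "S \<subseteq> N_set n e" and l: "l \<in> S"
    and a: "\<And>m. a m \<in> S" "\<And>m. path_dist l (a m) < (1/2)^m"
    and in_S: "\<And>s. sequence_path l a s \<in> S"
  shows "on_path_from (subtopology mtopology S) l a"
proof -
  have "continuous_map (top_of_set {0..1}) (subtopology mtopology S) (sequence_path l a)"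
    using S l a in_S by (intro continuous_map_sequence_path) (auto intro: less_imp_le)
  then show ?thesis
    unfolding on_path_from_def
    using sequence_path_zero sequence_path_at_centre bump_centre_tendsto_zero
      bump_centre_in_unit_interval
    by blast
qed

text \<open>A sequence converging fast to \<open>l\<close> lies on \<open>sequence_path l a\<close>, which only runs along
  segments issued from \<open>l\<close>.\<close>

lemma delta_generated_if_locally_star_shaped:
  assumes S: "S \<subseteq> N_set n e"
    and star: "\<And>l. l \<in> S \<Longrightarrow>
      \<exists>r>0. \<forall>a\<in>S. path_dist l a < r \<longrightarrow> (\<forall>u\<in>{0..1}. convex_comb u l a \<in> S)"
  shows "delta_generated (subtopology mtopology S)"
proof -
  interpret S: Submetric "N_set n e" path_dist S
    by unfold_locales (rule S)
  have "delta_generated S.sub.mtopology"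
  proof (rule S.sub.delta_generated_mtopologyI)
    fix l
    assume "l \<in> S"
    then obtain r where "r > 0"
      and r: "\<And>a u. a \<in> S \<Longrightarrow> path_dist l a < r \<Longrightarrow> u \<in> {0..1} \<Longrightarrow> convex_comb u l a \<in> S"
      using star by metis
    have "on_path_from S.sub.mtopology l a" if a: "\<forall>m. a m \<in> S.sub.mball l (min r ((1/2)^m))" for a
    proof -
      have aS: "a m \<in> S" "path_dist l (a m) < r" "path_dist l (a m) < (1/2)^m" for m
        using a by auto
      have "sequence_path l a s \<in> S" for s
      proof -
        obtain m where "sequence_path l a s = convex_comb (bump m s) l (a m)"
          using sequence_path_eq_convex_comb by blast
        then show ?thesis
          using r[OF aS(1,2)] bump_nonneg bump_le_one by simp
      qed
      then show ?thesis
        unfolding S.mtopology_submetric using S \<open>l \<in> S\<close> aS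
        by (intro on_path_from_sequence_path)
    qed
    then show "\<exists>r>0. \<forall>a. (\<forall>m. a m \<in> S.sub.mball l (min r ((1/2)^m))) \<longrightarrow>
        on_path_from S.sub.mtopology l a"
      using \<open>r > 0\<close> by blast
  qed
  then show ?thesis
    by (simp add: S.mtopology_submetric)
qed

lemma delta_generated_mtopology: "delta_generated mtopology"
  using delta_generated_if_locally_star_shaped[of "N_set n e"] convex_comb_N_set
  by (metis atLeastAtMost_iff subset_refl subtopology_topspace topspace_mtopology zero_less_one)

lemma N_top_eq_mtopology: "N_top n e = mtopology"
proof -
  have "N_top n e = delta_kelley compact_open_top"
    by (simp add: N_top_def TOP_def compact_open_top_def delta_kelley_subtopology_delta_kelley)
  then show ?thesis
    using compact_open_top_eq_mtopology delta_generated_mtopology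
    by (simp add: delta_generated_def)
qed

end

section \<open>Natural d-paths in the boundary of the cube\<close>

definition vanishing_coordinate_paths :: "nat \<Rightarrow> real \<Rightarrow> (real \<Rightarrow> nat \<Rightarrow> real) set" where
  "vanishing_coordinate_paths n e = {\<psi> \<in> N_set n e. \<exists>j<n. \<forall>t\<in>{0..e}. \<psi> t j = 0}"

lemma bij_betw_card_less:
  fixes A :: "nat set"
  assumes "finite A"
  shows "bij_betw (\<lambda>i. card {j \<in> A. j < i}) A {..<card A}"
proof -
  let ?rank = "\<lambda>i. card {j \<in> A. j < i}"
  have less: "?rank i < ?rank i'" if "i \<in> A" "i < i'" for i i'
    using that assms by (intro psubset_card_mono) auto
  have "inj_on ?rank A"
    by (metis (no_types, lifting) inj_onI less less_irrefl linorder_neqE_nat)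
  moreover have "?rank ` A \<subseteq> {..<card A}"
    using assms by (auto intro!: psubset_card_mono)
  ultimately show ?thesis
    by (simp add: bij_betw_def card_image card_subset_eq)
qed

lemma face_map_eq:
  assumes "S \<subseteq> {..<n}"
  shows "face_map n S x i =
    (if i \<in> {..<n} - S then x (card {j \<in> {..<n} - S. j < i}) else 0)"
proof (cases "i \<in> {..<n} - S")
  case True
  then have "{j. j < i \<and> j \<notin> S} = {j \<in> {..<n} - S. j < i}"
    by auto
  then show ?thesis
    using True by (simp add: face_map_def)
qed (auto simp: face_map_def)

lemma N_set_reindex:
  assumes r: "bij_betw r A {..<k}" and A: "A \<subseteq> {..<n}"
    and ext: "\<psi> \<in> extensional {0..e}" "\<phi> \<in> extensional {0..e}"
    and \<psi>: "\<And>t i. t \<in> {0..e} \<Longrightarrow> \<psi> t i = (if i \<in> A then \<phi> t (r i) else 0)"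
    and \<phi>: "\<And>t j. t \<in> {0..e} \<Longrightarrow> k \<le> j \<Longrightarrow> \<phi> t j = 0"
  shows "\<psi> \<in> N_set n e \<longleftrightarrow> \<phi> \<in> N_set k e"
proof -
  have all_less_k: "(\<forall>j<k. P j) \<longleftrightarrow> (\<forall>i\<in>A. P (r i))" for P
  proof -
    have "(\<forall>j<k. P j) \<longleftrightarrow> (\<forall>j\<in>r ` A. P j)"
      using r by (simp add: bij_betw_def lessThan_def)
    then show ?thesis
      by simp
  qed
  have A_less_n: "i \<in> A \<Longrightarrow> i < n" for i
    using A by blast
  have cube: "\<psi> t \<in> unit_cube n \<longleftrightarrow> \<phi> t \<in> unit_cube k" if "t \<in> {0..e}" for t
  proof -
    have "\<psi> t \<in> unit_cube n \<longleftrightarrow> (\<forall>i\<in>A. 0 \<le> \<phi> t (r i) \<and> \<phi> t (r i) \<le> 1)"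
      using \<psi>[OF that] by (auto simp: unit_cube_def dest: A_less_n)
    also have "\<dots> \<longleftrightarrow> \<phi> t \<in> unit_cube k"
      using all_less_k[of "\<lambda>j. 0 \<le> \<phi> t j \<and> \<phi> t j \<le> 1"] \<phi>[OF that]
      by (simp add: unit_cube_def)
    finally show ?thesis .
  qed
  have mono: "(\<forall>i<n. mono_on {0..e} (\<lambda>t. \<psi> t i)) \<longleftrightarrow> (\<forall>j<k. mono_on {0..e} (\<lambda>t. \<phi> t j))"
  proof -
    have "mono_on {0..e} (\<lambda>t. \<psi> t i) \<longleftrightarrow> (i \<in> A \<longrightarrow> mono_on {0..e} (\<lambda>t. \<phi> t (r i)))" for i
      using \<psi> by (auto simp: mono_on_def)
    then show ?thesis
      using all_less_k[of "\<lambda>j. mono_on {0..e} (\<lambda>t. \<phi> t j)"] A_less_n by auto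
  qed
  have sum: "(\<Sum>i<n. \<psi> t i) = (\<Sum>j<k. \<phi> t j)" if "t \<in> {0..e}" for t
  proof -
    have "(\<Sum>i<n. \<psi> t i) = (\<Sum>i\<in>{..<n} \<inter> A. \<phi> t (r i))"
      using \<psi>[OF that] by (simp add: sum.inter_restrict)
    also have "\<dots> = (\<Sum>i\<in>A. \<phi> t (r i))"
      using A by (simp add: Int_absorb1)
    also have "\<dots> = (\<Sum>j<k. \<phi> t j)"
      by (rule sum.reindex_bij_betw[OF r])
    finally show ?thesis .
  qed
  show ?thesis
    unfolding mem_N_set_iff using ext cube mono sum by auto
qed

lemma P_boundary_subset: "P_boundary n e \<subseteq> vanishing_coordinate_paths n e"
proof
  fix \<psi>
  assume "\<psi> \<in> P_boundary n e"
  then obtain S k \<phi> where \<psi>: "\<psi> = restrict (\<lambda>t. face_map n S (\<phi> t)) {0..e}"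
    and S: "S \<subseteq> {..<n}" "S \<noteq> {}" and k: "k = n - card S" and \<phi>: "\<phi> \<in> N_set k e"
    unfolding P_boundary_def by blast
  define A where "A = {..<n} - S"
  have "card A = k"
    using S(1) by (simp add: A_def k card_Diff_subset finite_subset)
  then have r: "bij_betw (\<lambda>i. card {j \<in> A. j < i}) A {..<k}"
    using bij_betw_card_less[of A] by (simp add: A_def)
  have \<psi>_eq: "\<psi> t i = (if i \<in> A then \<phi> t (card {j \<in> A. j < i}) else 0)" if "t \<in> {0..e}" for t i
    using that S(1) by (simp add: \<psi> A_def face_map_eq)
  have "\<psi> \<in> N_set n e"
  proof (rule N_set_reindex[OF r _ _ _ \<psi>_eq, THEN iffD2])
    show "\<phi> t j = 0" if "t \<in> {0..e}" "k \<le> j" for t j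
      using N_set_unit_cube[OF \<phi> that(1)] that(2) by (simp add: unit_cube_def)
    show "\<psi> \<in> extensional {0..e}"
      by (simp add: \<psi>)
  qed (use \<phi> N_set_extensional in \<open>auto simp: A_def\<close>)
  moreover obtain j where "j \<in> S"
    using S(2) by blast
  then have "j < n" "\<forall>t\<in>{0..e}. \<psi> t j = 0"
    using S(1) \<psi>_eq by (auto simp: A_def)
  ultimately show "\<psi> \<in> vanishing_coordinate_paths n e"
    unfolding vanishing_coordinate_paths_def by blast
qed

lemma N_set_eq_face_map:
  assumes \<psi>: "\<psi> \<in> N_set n e" and j0: "j0 < n" "\<forall>t\<in>{0..e}. \<psi> t j0 = 0"
  shows "\<exists>\<phi>\<in>N_set (n - 1) e. \<psi> = restrict (\<lambda>t. face_map n {j0} (\<phi> t)) {0..e}"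
proof -
  define k where "k = n - 1"
  define A where "A = {..<n} - {j0}"
  define r where "r = (\<lambda>i. card {j \<in> A. j < i})"
  have r: "bij_betw r A {..<k}"
    using bij_betw_card_less[of A] j0(1) by (simp add: A_def r_def k_def)
  define \<phi> where "\<phi> = restrict (\<lambda>t j. if j < k then \<psi> t (inv_into A r j) else 0) {0..e}"
  have \<psi>_eq: "\<psi> t i = (if i \<in> A then \<phi> t (r i) else 0)" if "t \<in> {0..e}" for t i
  proof (cases "i \<in> A")
    case True
    then show ?thesis
      using that r bij_betw_apply[OF r True] by (simp add: \<phi>_def bij_betw_inv_into_left)
  next
    case False
    then have "i = j0 \<or> n \<le> i"
      by (auto simp: A_def)
    then show ?thesis
      using False j0 N_set_unit_cube[OF \<psi> that] that by (auto simp: unit_cube_def)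
  qed
  have "\<psi> \<in> N_set n e \<longleftrightarrow> \<phi> \<in> N_set k e"
  proof (rule N_set_reindex[OF r _ N_set_extensional[OF \<psi>] _ \<psi>_eq])
    show "\<phi> \<in> extensional {0..e}"
      unfolding \<phi>_def by (rule restrict_extensional)
  qed (auto simp: A_def \<phi>_def)
  then have "\<phi> \<in> N_set k e"
    using \<psi> by simp
  moreover have "\<psi> = restrict (\<lambda>t. face_map n {j0} (\<phi> t)) {0..e}"
  proof (rule extensionalityI[OF N_set_extensional[OF \<psi>]])
    show "\<psi> t = restrict (\<lambda>t. face_map n {j0} (\<phi> t)) {0..e} t" if "t \<in> {0..e}" for t
      using that j0(1) \<psi>_eq by (auto simp: face_map_eq A_def r_def)
  qed simp
  ultimately show ?thesis
    unfolding k_def by blast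
qed

lemma vanishing_coordinate_in_P_boundary:
  assumes "0 < e" and \<psi>: "\<psi> \<in> N_set n e" and j0: "j0 < n" "\<forall>t\<in>{0..e}. \<psi> t j0 = 0"
  shows "\<psi> \<in> P_boundary n e"
proof -
  have "n \<noteq> 1"
  proof
    assume "n = 1"
    then have "\<psi> e 0 = e"
      using N_set_sum[OF \<psi>, of e] \<open>0 < e\<close> by simp
    then show False
      using j0 \<open>n = 1\<close> \<open>0 < e\<close> by auto
  qed
  moreover obtain \<phi> where "\<phi> \<in> N_set (n - 1) e" "\<psi> = restrict (\<lambda>t. face_map n {j0} (\<phi> t)) {0..e}"
    using N_set_eq_face_map[OF \<psi> j0] by blast
  ultimately show ?thesis
    unfolding P_boundary_def using j0(1)
    by (intro CollectI exI[of _ "{j0}"] exI[of _ "n - 1"] exI[of _ \<phi>]) auto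
qed

lemma P_boundary_eq: "0 < e \<Longrightarrow> P_boundary n e = vanishing_coordinate_paths n e"
  using P_boundary_subset vanishing_coordinate_in_P_boundary
  by (auto simp: vanishing_coordinate_paths_def)

lemma (in Metric_space) sequentially_compact_top_subtopology:
  assumes "compact_space (subtopology mtopology S)"
  shows "sequentially_compact_top (subtopology mtopology S)"
proof -
  interpret S: Submetric M d "M \<inter> S"
    by unfold_locales blast
  have eq: "subtopology mtopology S = S.sub.mtopology"
    using subtopology_restrict[of mtopology S] by (simp add: S.mtopology_submetric)
  have compact: "compact_space S.sub.mtopology"
    using assms eq by simp
  show ?thesis
    unfolding sequentially_compact_top_def eq S.sub.topspace_mtopology
  proof (intro allI impI)
    fix \<sigma> :: "nat \<Rightarrow> 'a"
    assume "\<forall>m. \<sigma> m \<in> M \<inter> S"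
    then have "range \<sigma> \<subseteq> M \<inter> S"
      by blast
    then show "\<exists>l r. l \<in> M \<inter> S \<and> strict_mono r \<and> limitin S.sub.mtopology (\<sigma> \<circ> r) l sequentially"
      using compact S.sub.compact_space_sequentially by blast
  qed
qed

context natural_paths
begin

lemma compact_space_mtopology: "compact_space mtopology"
  using compact_space_pointwise_top by (simp add: pointwise_top_eq_mtopology)

lemma closedin_vanishing_coordinate_paths: "closedin mtopology (vanishing_coordinate_paths n e)"
proof -
  have "closedin pointwise_top {\<psi> \<in> topspace pointwise_top. \<forall>t\<in>{0..e}. \<psi> t j \<in> {0}}" for j
    by (intro closedin_Collect_Ball_continuous continuous_map_pointwise_top_evaluation) auto
  then have "closedin mtopology (\<Union>j<n. {\<psi> \<in> N_set n e. \<forall>t\<in>{0..e}. \<psi> t j = 0})"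
    by (intro closedin_Union) (auto simp: pointwise_top_eq_mtopology)
  moreover have "(\<Union>j<n. {\<psi> \<in> N_set n e. \<forall>t\<in>{0..e}. \<psi> t j = 0}) = vanishing_coordinate_paths n e"
    by (auto simp: vanishing_coordinate_paths_def)
  ultimately show ?thesis
    by (simp only:)
qed

lemma eventually_vanishing_coordinate_near:
  assumes l: "l \<in> N_set n e"
  shows "\<forall>\<^sub>F r in at_right 0. \<forall>a\<in>N_set n e. path_dist l a < r \<longrightarrow>
    (\<forall>t\<in>{0..e}. a t j = 0) \<longrightarrow> (\<forall>t\<in>{0..e}. l t j = 0)"
proof (cases "\<forall>t\<in>{0..e}. l t j = 0")
  case False
  then obtain t where "t \<in> {0..e}" "l t j \<noteq> 0"
    by blast
  have "\<forall>\<^sub>F r in at_right 0. r < \<bar>l t j\<bar>"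
    using \<open>l t j \<noteq> 0\<close> by (intro eventually_at_rightI[where b="\<bar>l t j\<bar>"]) auto
  then show ?thesis
  proof (rule eventually_mono, intro ballI impI)
    fix r a s
    assume "r < \<bar>l t j\<bar>" "a \<in> N_set n e" "path_dist l a < r" "\<forall>t\<in>{0..e}. a t j = 0"
    moreover have "\<bar>l t j - a t j\<bar> \<le> path_dist l a"
      using abs_le_path_dist[OF l \<open>a \<in> N_set n e\<close>] .
    ultimately show "l s j = 0"
      using \<open>t \<in> {0..e}\<close> by auto
  qed
qed simp

text \<open>Paths close to \<open>l\<close> can only vanish in coordinates in which \<open>l\<close> vanishes, and there the
  whole segment between them vanishes.\<close>

lemma vanishing_coordinate_paths_locally_star_shaped:
  assumes l: "l \<in> N_set n e"
  shows "\<exists>r>0. \<forall>a\<in>vanishing_coordinate_paths n e. path_dist l a < r \<longrightarrow>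
    (\<forall>u\<in>{0..1}. convex_comb u l a \<in> vanishing_coordinate_paths n e)"
proof -
  have "\<forall>\<^sub>F r in at_right 0. \<forall>j\<in>{..<n}. \<forall>a\<in>N_set n e. path_dist l a < r \<longrightarrow>
      (\<forall>t\<in>{0..e}. a t j = 0) \<longrightarrow> (\<forall>t\<in>{0..e}. l t j = 0)"
    using eventually_vanishing_coordinate_near[OF l] by (intro eventually_ball_finite) auto
  then obtain b where "b > 0" and b: "\<forall>r>0. r < b \<longrightarrow> (\<forall>j\<in>{..<n}. \<forall>a\<in>N_set n e.
      path_dist l a < r \<longrightarrow> (\<forall>t\<in>{0..e}. a t j = 0) \<longrightarrow> (\<forall>t\<in>{0..e}. l t j = 0))"
    unfolding eventually_at_right_field by blast
  define r where "r = b / 2"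
  have "r > 0" "r < b"
    using \<open>b > 0\<close> by (simp_all add: r_def)
  then have r: "\<And>j a. j < n \<Longrightarrow> a \<in> N_set n e \<Longrightarrow> path_dist l a < r \<Longrightarrow>
      \<forall>t\<in>{0..e}. a t j = 0 \<Longrightarrow> \<forall>t\<in>{0..e}. l t j = 0"
    using b by simp
  have "convex_comb u l a \<in> vanishing_coordinate_paths n e"
    if a: "a \<in> N_set n e" "j < n" "\<forall>t\<in>{0..e}. a t j = 0" and "path_dist l a < r"
      and u: "u \<in> {0..1}" for a j u
  proof -
    have "\<forall>t\<in>{0..e}. l t j = 0"
      using r[OF a(2,1) \<open>path_dist l a < r\<close> a(3)] .
    then have "\<forall>t\<in>{0..e}. convex_comb u l a t j = 0"
      using a(3) by (simp add: convex_comb_def)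
    then show ?thesis
      using convex_comb_N_set[OF l a(1)] u a(2) by (auto simp: vanishing_coordinate_paths_def)
  qed
  then show ?thesis
    using \<open>r > 0\<close> unfolding vanishing_coordinate_paths_def by (intro exI[of _ r]) blast
qed

lemma delta_generated_vanishing_coordinate_paths:
  "delta_generated (subtopology mtopology (vanishing_coordinate_paths n e))"
  using vanishing_coordinate_paths_locally_star_shaped
  by (intro delta_generated_if_locally_star_shaped) (auto simp: vanishing_coordinate_paths_def)

end

theorem proposition4p8:
  fixes n :: nat and \<epsilon> :: real
  assumes "1 \<le> n" and "0 < \<epsilon>" and "\<epsilon> < 1"
  shows "P_boundary n \<epsilon> \<subseteq> topspace (N_top n \<epsilon>)
    \<and> closedin (N_top n \<epsilon>) (P_boundary n \<epsilon>)
    \<and> delta_generated (subtopology (N_top n \<epsilon>) (P_boundary n \<epsilon>))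
    \<and> delta_hausdorff (subtopology (N_top n \<epsilon>) (P_boundary n \<epsilon>))
    \<and> metrizable_space (subtopology (N_top n \<epsilon>) (P_boundary n \<epsilon>))
    \<and> compact_space (subtopology (N_top n \<epsilon>) (P_boundary n \<epsilon>))
    \<and> sequentially_compact_top (subtopology (N_top n \<epsilon>) (P_boundary n \<epsilon>))"
proof -
  interpret natural_paths n \<epsilon>
    using assms(2) by unfold_locales simp
  have boundary: "P_boundary n \<epsilon> = vanishing_coordinate_paths n \<epsilon>"
    using assms(2) by (rule P_boundary_eq)
  have closed: "closedin mtopology (P_boundary n \<epsilon>)"
    unfolding boundary by (rule closedin_vanishing_coordinate_paths)
  then have compact: "compact_space (subtopology mtopology (P_boundary n \<epsilon>))"
    by (intro compact_space_subtopology closedin_compact_space[OF compact_space_mtopology])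
  show ?thesis
    unfolding N_top_eq_mtopology
    using closed closedin_subset[OF closed] compact sequentially_compact_top_subtopology[OF compact]
      delta_generated_vanishing_coordinate_paths[folded boundary]
      Hausdorff_imp_delta_hausdorff[OF Hausdorff_space_subtopology[OF Hausdorff_space_mtopology]]
      metrizable_space_subtopology[OF metrizable_space_mtopology]
    by simp
qed

end
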